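(* Let $\Phi$ be a Markov Logic Network with largest formula arity $d$, let $n,m$ be positive integers, and let $\omega$ be an interpretation on $[n+m]$. Then $$w(\omega) \leq w(\omega \downarrow [n]) \times w(\omega \downarrow [\bar{n}]) \times \prod_{k \in [d]} (w^{max}_{k})^{ \binom{n+m}{k} - \binom{n}{k} - \binom{m}{k}}$$ and $$w(\omega) \geq w(\omega \downarrow [n]) \times w(\omega \downarrow [\bar{n}]) \times \prod_{k \in [d]} (w^{min}_{k})^{ \binom{n+m}{k} - \binom{n}{k} - \binom{m}{k}},$$ where $[\bar n]=\{n+1,\dots,n+m\}$.
   Context: Fix a finite function-free relational first-order signature $\mathcal{R}$. For a positive integer $N$ write $[N]=\{1,\dots,N\}$. For a finite set $D$ of constants, a ground atom over $D$ is $R(a_1,\dots,a_r)$ with $R\in\mathcal{R}$ of arity $r$ and $a_1,\dots,a_r\in D$. An interpretation on $D$ is a map assigning true/false to every ground atom over $D$; $\Omega^{(N)}$ is the set of interpretations on $[N]$. For an interpretation $\omega$ on $D$ and $I\subseteq D$, $\omega\downarrow I$ is the interpretation on $I$ obtained by restricting $\omega$ to the ground atoms all of whose arguments lie in $I$. A Markov Logic Network (MLN) $\Phi$ is a finite set of pairs $(\phi_i,a_i)$, where $\phi_i$ is a function-free, quantifier-free first-order formula over $\mathcal{R}$ and $a_i\in\mathbb{R}$. The arity of $\phi_i$ is the number of distinct variables in it; $\Phi_k$ is the set of pairs whose formula has arity $k$. Convention: a formula with $k$ variables is grounded only by substituting $k$ pairwise distinct constants for its variables; for an interpretation $\omega$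 on a finite set $D$, $N(\phi,\omega)$ is the number of injective assignments of the variables of $\phi$ to elements of $D$ under which $\phi$ is true in $\omega$. The weight of an interpretation $\omega$ on any finite domain is $w(\omega)=\exp\bigl(\sum_{(\phi_i,a_i)\in\Phi}a_iN(\phi_i,\omega)\bigr)$, and its $k$-weight is $w_k(\omega)=\exp\bigl(\sum_{(\phi_i,a_i)\in\Phi_k}a_iN(\phi_i,\omega)\bigr)$. $w_k^{max}$ and $w_k^{min}$ denote the maximum and minimum of $w_k(\omega')$ over all interpretations $\omega'$ on a $k$-element domain (e.g. on $[k]$). Binomial coefficients $\binom{a}{k}$ with $k>a$ are $0$. *)

theory Defs
  imports Complex_Main "HOL-Library.FuncSet"
begin

text \<open>Signature: relation symbols form a finite type 'r, with arity function ar.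
  Constants are natural numbers. Quantifier-free, function-free formulas with
  variables of type 'v.\<close>

datatype ('r, 'v) qf =
    Tru
  | Atom 'r "'v list"
  | Eq 'v 'v
  | Neg "('r, 'v) qf"
  | Conj "('r, 'v) qf" "('r, 'v) qf"
  | Disj "('r, 'v) qf" "('r, 'v) qf"

primrec fvars :: "('r, 'v) qf \<Rightarrow> 'v set" where
  "fvars Tru = {}"
| "fvars (Atom R vs) = set vs"
| "fvars (Eq x y) = {x, y}"
| "fvars (Neg p) = fvars p"
| "fvars (Conj p q) = fvars p \<union> fvars q"
| "fvars (Disj p q) = fvars p \<union> fvars q"

text \<open>An interpretation is a truth assignment to ground atoms R(a1..ar); we
  represent it as a predicate that is False on everything that is not a ground
  atom over D (so interpretations on D correspond exactly to such predicates).\<close>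

type_synonym 'r interp = "'r \<Rightarrow> nat list \<Rightarrow> bool"

definition interps :: "('r \<Rightarrow> nat) \<Rightarrow> nat set \<Rightarrow> 'r interp set" where
  "interps ar D = {\<omega>. \<forall>R as. \<omega> R as \<longrightarrow> length as = ar R \<and> set as \<subseteq> D}"

definition restr :: "'r interp \<Rightarrow> nat set \<Rightarrow> 'r interp" where
  "restr \<omega> I = (\<lambda>R as. \<omega> R as \<and> set as \<subseteq> I)"

primrec holds :: "'r interp \<Rightarrow> ('v \<Rightarrow> nat) \<Rightarrow> ('r, 'v) qf \<Rightarrow> bool" where
  "holds \<omega> \<sigma> Tru = True"
| "holds \<omega> \<sigma> (Atom R vs) = \<omega> R (map \<sigma> vs)"
| "holds \<omega> \<sigma> (Eq x y) = (\<sigma> x = \<sigma> y)"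
| "holds \<omega> \<sigma> (Neg p) = (\<not> holds \<omega> \<sigma> p)"
| "holds \<omega> \<sigma> (Conj p q) = (holds \<omega> \<sigma> p \<and> holds \<omega> \<sigma> q)"
| "holds \<omega> \<sigma> (Disj p q) = (holds \<omega> \<sigma> p \<or> holds \<omega> \<sigma> q)"

definition ngr :: "('r, 'v) qf \<Rightarrow> nat set \<Rightarrow> 'r interp \<Rightarrow> nat" where
  "ngr \<phi> D \<omega> = card {\<sigma> \<in> fvars \<phi> \<rightarrow>\<^sub>E D. inj_on \<sigma> (fvars \<phi>) \<and> holds \<omega> \<sigma> \<phi>}"

type_synonym ('r, 'v) mln = "(('r, 'v) qf \<times> real) set"

definition farity :: "('r, 'v) qf \<Rightarrow> nat" where
  "farity \<phi> = card (fvars \<phi>)"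

definition max_arity :: "('r, 'v) mln \<Rightarrow> nat" where
  "max_arity \<Phi> = Max (insert 0 ((\<lambda>(\<phi>, a). farity \<phi>) ` \<Phi>))"

definition weight :: "('r, 'v) mln \<Rightarrow> nat set \<Rightarrow> 'r interp \<Rightarrow> real" where
  "weight \<Phi> D \<omega> = exp (\<Sum>(\<phi>, a)\<in>\<Phi>. a * real (ngr \<phi> D \<omega>))"

definition kweight :: "('r, 'v) mln \<Rightarrow> nat \<Rightarrow> nat set \<Rightarrow> 'r interp \<Rightarrow> real" where
  "kweight \<Phi> k D \<omega> = exp (\<Sum>(\<phi>, a)\<in>{p \<in> \<Phi>. farity (fst p) = k}. a * real (ngr \<phi> D \<omega>))"

definition wmax :: "('r \<Rightarrow> nat) \<Rightarrow> ('r, 'v) mln \<Rightarrow> nat \<Rightarrow> real" where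
  "wmax ar \<Phi> k = Max (kweight \<Phi> k {1..k} ` interps ar {1..k})"

definition wmin :: "('r \<Rightarrow> nat) \<Rightarrow> ('r, 'v) mln \<Rightarrow> nat \<Rightarrow> real" where
  "wmin ar \<Phi> k = Min (kweight \<Phi> k {1..k} ` interps ar {1..k})"

end

theory Submission
  imports Defs
begin

text \<open>
  A true injective grounding of a k-ary formula over D has as image a k-element subset S of D,
  and it is a true grounding over S of the restriction of \<omega> to S. Hence the weight of \<omega> is the
  product, over 1 \<le> k \<le> d and over all k-subsets S of the domain, of the k-weights of the
  restrictions of \<omega> to S. When the domain is split into [n] and [n+1..n+m], the k-subsets lying
  inside one of the two parts make up the weights of the two restrictions, and each of the
  remaining (n+m choose k) - (n choose k) - (m choose k) crossing subsets contributes a factor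
  which, after relabelling S onto [k], is the k-weight of an interpretation on [k] and therefore
  lies between the minimal and the maximal k-weight.
\<close>

lemma finite_fvars [simp]: "finite (fvars \<phi>)"
  by (induction \<phi>) auto

definition groundings :: "('r, 'v) qf \<Rightarrow> nat set \<Rightarrow> 'r interp \<Rightarrow> ('v \<Rightarrow> nat) set" where
  "groundings \<phi> D \<omega> = {\<sigma> \<in> fvars \<phi> \<rightarrow>\<^sub>E D. inj_on \<sigma> (fvars \<phi>) \<and> holds \<omega> \<sigma> \<phi>}"

lemma ngr_eq_card_groundings: "ngr \<phi> D \<omega> = card (groundings \<phi> D \<omega>)"
  by (simp add: ngr_def groundings_def)

lemma finite_groundings: "finite D \<Longrightarrow> finite (groundings \<phi> D \<omega>)"
  by (simp add: groundings_def finite_PiE)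

lemma holds_cong: "(\<And>x. x \<in> fvars \<phi> \<Longrightarrow> \<sigma> x = \<tau> x) \<Longrightarrow> holds \<omega> \<sigma> \<phi> = holds \<omega> \<tau> \<phi>"
  by (induction \<phi>) (auto cong: map_cong)

lemma holds_restr: "\<sigma> ` fvars \<phi> \<subseteq> S \<Longrightarrow> holds (restr \<omega> S) \<sigma> \<phi> = holds \<omega> \<sigma> \<phi>"
  by (induction \<phi>) (auto simp: restr_def)

lemma restr_restr: "S \<subseteq> T \<Longrightarrow> restr (restr \<omega> T) S = restr \<omega> S"
  by (auto simp: restr_def fun_eq_iff)

lemma holds_transport:
  assumes "inj_on h S" "\<sigma> ` fvars \<phi> \<subseteq> S"
    and "\<And>R as. set as \<subseteq> S \<Longrightarrow> \<omega>' R (map h as) = \<omega> R as"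
  shows "holds \<omega>' (h \<circ> \<sigma>) \<phi> = holds \<omega> \<sigma> \<phi>"
  using assms(2)
proof (induction \<phi>)
  case (Atom R vs)
  then show ?case using assms(3)[of "map \<sigma> vs"] by (auto simp: comp_def)
next
  case (Eq x y)
  then show ?case using assms(1) by (auto simp: inj_on_eq_iff)
qed auto

lemma ngr_le_transport:
  assumes "inj_on h S" "h ` S \<subseteq> T" "finite T"
    and "\<And>R as. set as \<subseteq> S \<Longrightarrow> \<omega>' R (map h as) = \<omega> R as"
  shows "ngr \<phi> S \<omega> \<le> ngr \<phi> T \<omega>'"
  unfolding ngr_eq_card_groundings
proof (rule card_inj_on_le[OF _ _ finite_groundings[OF assms(3)]])
  let ?F = "fvars \<phi>"
  let ?push = "\<lambda>\<sigma>. restrict (h \<circ> \<sigma>) ?F"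
  show "inj_on ?push (groundings \<phi> S \<omega>)"
  proof (rule inj_onI)
    fix \<sigma> \<tau> assume \<sigma>: "\<sigma> \<in> groundings \<phi> S \<omega>" and \<tau>: "\<tau> \<in> groundings \<phi> S \<omega>"
      and "?push \<sigma> = ?push \<tau>"
    then have "h (\<sigma> x) = h (\<tau> x)" if "x \<in> ?F" for x
      using that by (metis comp_apply restrict_apply')
    with \<sigma> \<tau> show "\<sigma> = \<tau>"
      by (intro PiE_ext[of \<sigma> ?F "\<lambda>_. S"])
        (auto simp: groundings_def PiE_iff inj_on_eq_iff[OF assms(1)])
  qed
  show "?push ` groundings \<phi> S \<omega> \<subseteq> groundings \<phi> T \<omega>'"
  proof (rule image_subsetI)
    fix \<sigma> assume "\<sigma> \<in> groundings \<phi> S \<omega>"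
    then have \<sigma>: "\<sigma> \<in> ?F \<rightarrow>\<^sub>E S" "inj_on \<sigma> ?F" "holds \<omega> \<sigma> \<phi>"
      by (auto simp: groundings_def)
    then have img: "\<sigma> ` ?F \<subseteq> S" by auto
    have "holds \<omega>' (?push \<sigma>) \<phi> = holds \<omega>' (h \<circ> \<sigma>) \<phi>"
      by (rule holds_cong) simp
    also have "\<dots> = holds \<omega> \<sigma> \<phi>"
      by (rule holds_transport[OF assms(1) img]) (rule assms(4))
    finally show "?push \<sigma> \<in> groundings \<phi> T \<omega>'"
      using \<sigma> img assms(2) inj_on_subset[OF assms(1) img]
      by (auto simp: groundings_def restrict_PiE_iff image_subset_iff intro: comp_inj_on)
  qed
qed

lemma ngr_transport:
  assumes h: "bij_betw h S T" and "finite S"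
    and \<omega>': "\<And>R as. set as \<subseteq> S \<Longrightarrow> \<omega>' R (map h as) = \<omega> R as"
  shows "ngr \<phi> S \<omega> = ngr \<phi> T \<omega>'"
proof (rule antisym)
  show "ngr \<phi> S \<omega> \<le> ngr \<phi> T \<omega>'"
    using h \<omega>' bij_betw_finite[OF h] \<open>finite S\<close>
    by (intro ngr_le_transport[of h]) (auto simp: bij_betw_def)
  let ?g = "inv_into S h"
  have "\<omega> R (map ?g bs) = \<omega>' R bs" if "set bs \<subseteq> T" for R bs
  proof -
    have "map h (map ?g bs) = bs"
      using that by (simp add: map_idI bij_betw_inv_into_right[OF h] subset_iff)
    moreover have "set (map ?g bs) \<subseteq> S"
      using that bij_betw_apply[OF bij_betw_inv_into[OF h]] by auto
    ultimately show ?thesis using \<omega>' by metis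
  qed
  then show "ngr \<phi> T \<omega>' \<le> ngr \<phi> S \<omega>"
    using bij_betw_inv_into[OF h] \<open>finite S\<close>
    by (intro ngr_le_transport[of ?g]) (auto simp: bij_betw_def)
qed

definition ksubsets :: "'a set \<Rightarrow> nat \<Rightarrow> 'a set set" where
  "ksubsets D k = {S. S \<subseteq> D \<and> card S = k}"

lemma finite_ksubsets: "finite D \<Longrightarrow> finite (ksubsets D k)"
  by (rule finite_subset[of _ "Pow D"]) (auto simp: ksubsets_def)

lemma card_ksubsets: "finite D \<Longrightarrow> card (ksubsets D k) = card D choose k"
  unfolding ksubsets_def by (rule n_subsets)

lemma groundings_with_image:
  assumes "finite D" "S \<in> ksubsets D (farity \<phi>)"
  shows "{\<sigma> \<in> groundings \<phi> D \<omega>. \<sigma> ` fvars \<phi> = S} = groundings \<phi> S (restr \<omega> S)"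
proof -
  have S: "S \<subseteq> D" "card S = card (fvars \<phi>)" "finite S"
    using assms by (auto simp: ksubsets_def farity_def intro: finite_subset)
  have onto: "\<sigma> ` fvars \<phi> = S" if "\<sigma> \<in> fvars \<phi> \<rightarrow>\<^sub>E S" "inj_on \<sigma> (fvars \<phi>)" for \<sigma>
    using that S by (intro card_subset_eq) (auto simp: card_image)
  show ?thesis
    using S holds_restr[of _ \<phi> S \<omega>] by (auto simp: groundings_def onto)
qed

lemma ngr_eq_sum_ksubsets:
  assumes "finite D"
  shows "ngr \<phi> D \<omega> = (\<Sum>S\<in>ksubsets D (farity \<phi>). ngr \<phi> S (restr \<omega> S))"
proof -
  have "ngr \<phi> D \<omega> = (\<Sum>S\<in>ksubsets D (farity \<phi>). card {\<sigma> \<in> groundings \<phi> D \<omega>. \<sigma> ` fvars \<phi> = S})"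
    unfolding ngr_eq_card_groundings card_eq_sum
    using assms by (intro sum.group[symmetric] finite_ksubsets finite_groundings)
      (auto simp: groundings_def ksubsets_def farity_def card_image)
  also have "\<dots> = (\<Sum>S\<in>ksubsets D (farity \<phi>). ngr \<phi> S (restr \<omega> S))"
    using assms by (intro sum.cong refl) (simp add: groundings_with_image ngr_eq_card_groundings)
  finally show ?thesis .
qed

lemma farity_le_max_arity: "finite \<Phi> \<Longrightarrow> (\<phi>, a) \<in> \<Phi> \<Longrightarrow> farity \<phi> \<le> max_arity \<Phi>"
  unfolding max_arity_def by (rule Max_ge) force+

lemma weight_eq_prod_kweight:
  fixes \<Phi> :: "('r, 'v) mln" and \<omega> :: "'r interp"
  assumes "finite \<Phi>" "\<forall>(\<phi>, a)\<in>\<Phi>. farity \<phi> \<ge> 1" "finite D"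
  shows "weight \<Phi> D \<omega> =
    (\<Prod>k\<in>{1..max_arity \<Phi>}. \<Prod>S\<in>ksubsets D k. kweight \<Phi> k S (restr \<omega> S))"
proof -
  define c where "c p S = snd p * real (ngr (fst p) S (restr \<omega> S))" for p :: "('r, 'v) qf \<times> real" and S
  have "(\<Sum>(\<phi>, a)\<in>\<Phi>. a * real (ngr \<phi> D \<omega>)) = (\<Sum>p\<in>\<Phi>. \<Sum>S\<in>ksubsets D (farity (fst p)). c p S)"
    using assms(3) by (simp add: split_def c_def ngr_eq_sum_ksubsets sum_distrib_left)
  also have "\<dots> = (\<Sum>k\<in>{1..max_arity \<Phi>}. \<Sum>p\<in>{p \<in> \<Phi>. farity (fst p) = k}.
      \<Sum>S\<in>ksubsets D (farity (fst p)). c p S)"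
    using assms(1,2) farity_le_max_arity[OF assms(1)] by (intro sum.group[symmetric]) force+
  also have "\<dots> = (\<Sum>k\<in>{1..max_arity \<Phi>}. \<Sum>S\<in>ksubsets D k. \<Sum>p\<in>{p \<in> \<Phi>. farity (fst p) = k}. c p S)"
    by (simp add: sum.swap[of _ _ "ksubsets D _"])
  finally show ?thesis
    unfolding weight_def kweight_def c_def split_def by (simp add: exp_sum finite_ksubsets assms(3))
qed

lemma finite_interps:
  fixes ar :: "'r::finite \<Rightarrow> nat"
  assumes "finite D"
  shows "finite (interps ar D)"
proof -
  define atoms where "atoms = (SIGMA R:UNIV. {as. set as \<subseteq> D \<and> length as = ar R})"
  have "finite atoms"
    unfolding atoms_def using assms by (intro finite_SigmaI finite_lists_length_eq) auto
  moreover have "interps ar D \<subseteq> (\<lambda>A R as. (R, as) \<in> A) ` Pow atoms"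
  proof
    fix \<omega> assume "\<omega> \<in> interps ar D"
    then have "{(R, as). \<omega> R as} \<in> Pow atoms"
      by (auto simp: interps_def atoms_def)
    then show "\<omega> \<in> (\<lambda>A R as. (R, as) \<in> A) ` Pow atoms"
      by (rule rev_image_eqI) (simp add: fun_eq_iff)
  qed
  ultimately show ?thesis by (simp add: finite_subset)
qed

lemma kweight_restr_in_kweight_interps:
  fixes ar :: "'r::finite \<Rightarrow> nat"
  assumes "\<omega> \<in> interps ar D" "finite S" "card S = k"
  shows "kweight \<Phi> k S (restr \<omega> S) \<in> kweight \<Phi> k {1..k} ` interps ar {1..k}"
proof -
  obtain h where h: "bij_betw h S {1..k}"
    using finite_same_card_bij[OF assms(2), of "{1..k}"] assms(3) by auto
  define \<omega>' where "\<omega>' R bs \<longleftrightarrow> set bs \<subseteq> {1..k} \<and> restr \<omega> S R (map (inv_into S h) bs)" for R bs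
  have "\<omega>' \<in> interps ar {1..k}"
    using assms(1) by (auto simp: interps_def \<omega>'_def restr_def) (metis length_map)
  moreover have transport: "\<omega>' R (map h as) = restr \<omega> S R as" if "set as \<subseteq> S" for R as
  proof -
    have "map (inv_into S h) (map h as) = as"
      using that by (simp add: map_idI bij_betw_inv_into_left[OF h] subset_iff)
    then show ?thesis
      using that bij_betw_apply[OF h] by (auto simp: \<omega>'_def)
  qed
  then have "kweight \<Phi> k S (restr \<omega> S) = kweight \<Phi> k {1..k} \<omega>'"
    unfolding kweight_def
    by (simp add: ngr_transport[OF h assms(2), where \<omega>' = \<omega>' and \<omega> = "restr \<omega> S", OF transport])
  ultimately show ?thesis by blast
qed

lemma kweight_restr_bounds:
  fixes ar :: "'r::finite \<Rightarrow> nat"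
  assumes "\<omega> \<in> interps ar D" "finite S" "card S = k"
  shows "wmin ar \<Phi> k \<le> kweight \<Phi> k S (restr \<omega> S)" "kweight \<Phi> k S (restr \<omega> S) \<le> wmax ar \<Phi> k"
proof -
  have "kweight \<Phi> k S (restr \<omega> S) \<in> kweight \<Phi> k {1..k} ` interps ar {1..k}"
    by (rule kweight_restr_in_kweight_interps[OF assms])
  then show "wmin ar \<Phi> k \<le> kweight \<Phi> k S (restr \<omega> S)" "kweight \<Phi> k S (restr \<omega> S) \<le> wmax ar \<Phi> k"
    unfolding wmin_def wmax_def by (simp_all add: finite_interps)
qed

lemma wmin_pos:
  fixes ar :: "'r::finite \<Rightarrow> nat"
  shows "0 < wmin ar \<Phi> k"
proof -
  have "(\<lambda>_ _. False) \<in> interps ar {1..k}"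
    by (simp add: interps_def)
  then have "wmin ar \<Phi> k \<in> kweight \<Phi> k {1..k} ` interps ar {1..k}"
    unfolding wmin_def by (intro Min_in) (auto simp: finite_interps)
  then show ?thesis
    by (auto simp: kweight_def)
qed

definition crossing_ksubsets :: "'a set \<Rightarrow> 'a set \<Rightarrow> nat \<Rightarrow> 'a set set" where
  "crossing_ksubsets A B k = ksubsets (A \<union> B) k - ksubsets A k - ksubsets B k"

lemma ksubsets_Un_partition:
  assumes "A \<inter> B = {}" "0 < k"
  shows "ksubsets (A \<union> B) k = (ksubsets A k \<union> ksubsets B k) \<union> crossing_ksubsets A B k"
    and "ksubsets A k \<inter> ksubsets B k = {}"
    and "(ksubsets A k \<union> ksubsets B k) \<inter> crossing_ksubsets A B k = {}"
proof -
  have "S = {}" if "S \<subseteq> A" "S \<subseteq> B" for S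
    using that assms(1) by blast
  then show "ksubsets A k \<inter> ksubsets B k = {}"
    using assms(2) by (auto simp: ksubsets_def) (metis card.empty less_irrefl)
qed (auto simp: crossing_ksubsets_def ksubsets_def)

lemma finite_crossing_ksubsets: "finite A \<Longrightarrow> finite B \<Longrightarrow> finite (crossing_ksubsets A B k)"
  by (simp add: crossing_ksubsets_def finite_ksubsets)

lemma prod_ksubsets_Un:
  assumes "finite A" "finite B" "A \<inter> B = {}" "0 < k"
  shows "(\<Prod>S\<in>ksubsets (A \<union> B) k. f S) =
    (\<Prod>S\<in>ksubsets A k. f S) * (\<Prod>S\<in>ksubsets B k. f S) * (\<Prod>S\<in>crossing_ksubsets A B k. f S)"
  unfolding ksubsets_Un_partition(1)[OF assms(3,4)] using assms
  by (simp add: prod.union_disjoint ksubsets_Un_partition(2,3) finite_ksubsets finite_crossing_ksubsets)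

lemma card_crossing_ksubsets:
  assumes "finite A" "finite B" "A \<inter> B = {}" "0 < k"
  shows "card (crossing_ksubsets A B k) = (card A + card B choose k) - (card A choose k) - (card B choose k)"
proof -
  have "card (ksubsets (A \<union> B) k) = card (ksubsets A k) + card (ksubsets B k) + card (crossing_ksubsets A B k)"
    unfolding ksubsets_Un_partition(1)[OF assms(3,4)] using assms
    by (simp add: card_Un_disjoint ksubsets_Un_partition(2,3) finite_ksubsets finite_crossing_ksubsets)
  then show ?thesis
    using assms by (simp add: card_ksubsets card_Un_disjoint)
qed

lemma weight_Un_disjoint:
  fixes \<Phi> :: "('r, 'v) mln" and \<omega> :: "'r interp"
  assumes "finite \<Phi>" "\<forall>(\<phi>, a)\<in>\<Phi>. farity \<phi> \<ge> 1"
    and "finite A" "finite B" "A \<inter> B = {}"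
  shows "weight \<Phi> (A \<union> B) \<omega> = weight \<Phi> A (restr \<omega> A) * weight \<Phi> B (restr \<omega> B) *
    (\<Prod>k\<in>{1..max_arity \<Phi>}. \<Prod>S\<in>crossing_ksubsets A B k. kweight \<Phi> k S (restr \<omega> S))"
proof -
  have "weight \<Phi> C (restr \<omega> C) =
      (\<Prod>k\<in>{1..max_arity \<Phi>}. \<Prod>S\<in>ksubsets C k. kweight \<Phi> k S (restr \<omega> S))" if "finite C" for C
    using that by (simp add: weight_eq_prod_kweight[OF assms(1,2)] restr_restr ksubsets_def)
  with assms show ?thesis
    by (simp add: weight_eq_prod_kweight prod_ksubsets_Un prod.distrib)
qed

lemma prod_between_powers:
  fixes f :: "'a \<Rightarrow> 'b::linordered_semidom"
  assumes "\<And>i. i \<in> I \<Longrightarrow> lo \<le> f i" "\<And>i. i \<in> I \<Longrightarrow> f i \<le> hi" "0 \<le> lo"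
  shows "lo ^ card I \<le> prod f I" "prod f I \<le> hi ^ card I"
proof -
  show "lo ^ card I \<le> prod f I"
    using prod_mono[of I "\<lambda>_. lo" f] assms(1,3) by simp
  show "prod f I \<le> hi ^ card I"
    using prod_mono[of I f "\<lambda>_. hi"] assms by (simp add: order_trans[OF assms(3)])
qed

lemma prod_crossing_kweight_bounds:
  fixes ar :: "'r::finite \<Rightarrow> nat"
  assumes "\<omega> \<in> interps ar D" "finite A" "finite B" "A \<inter> B = {}" "0 < k"
  defines "c \<equiv> (card A + card B choose k) - (card A choose k) - (card B choose k)"
  shows "wmin ar \<Phi> k ^ c \<le> (\<Prod>S\<in>crossing_ksubsets A B k. kweight \<Phi> k S (restr \<omega> S))"
    and "(\<Prod>S\<in>crossing_ksubsets A B k. kweight \<Phi> k S (restr \<omega> S)) \<le> wmax ar \<Phi> k ^ c"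
proof -
  have "finite S" "card S = k" if "S \<in> crossing_ksubsets A B k" for S
    using that assms(2,3) by (auto simp: crossing_ksubsets_def ksubsets_def intro: finite_subset)
  note bounds = kweight_restr_bounds[OF assms(1) this]
  show "wmin ar \<Phi> k ^ c \<le> (\<Prod>S\<in>crossing_ksubsets A B k. kweight \<Phi> k S (restr \<omega> S))"
    "(\<Prod>S\<in>crossing_ksubsets A B k. kweight \<Phi> k S (restr \<omega> S)) \<le> wmax ar \<Phi> k ^ c"
    unfolding c_def card_crossing_ksubsets[OF assms(2-5), symmetric]
    using bounds less_imp_le[OF wmin_pos] by (blast intro: prod_between_powers)+
qed

theorem proposition1:
  fixes ar :: "'r::finite \<Rightarrow> nat"
    and \<Phi> :: "('r, 'v) mln"
    and n m :: nat
    and \<omega> :: "'r interp"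
  assumes "finite \<Phi>"
    and "\<forall>(\<phi>, a)\<in>\<Phi>. farity \<phi> \<ge> 1"
    and "n > 0" and "m > 0"
    and "\<omega> \<in> interps ar {1..n+m}"
  shows "(weight \<Phi> {1..n+m} \<omega> \<le>
           weight \<Phi> {1..n} (restr \<omega> {1..n}) * weight \<Phi> {n+1..n+m} (restr \<omega> {n+1..n+m}) *
           (\<Prod>k\<in>{1..max_arity \<Phi>}. wmax ar \<Phi> k ^ ((n+m choose k) - (n choose k) - (m choose k)))) \<and>
         (weight \<Phi> {1..n+m} \<omega> \<ge>
           weight \<Phi> {1..n} (restr \<omega> {1..n}) * weight \<Phi> {n+1..n+m} (restr \<omega> {n+1..n+m}) *
           (\<Prod>k\<in>{1..max_arity \<Phi>}. wmin ar \<Phi> k ^ ((n+m choose k) - (n choose k) - (m choose k))))"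
proof -
  let ?N = "{1..n}" and ?M = "{n+1..n+m}" and ?K = "{1..max_arity \<Phi>}"
  define e where "e k = (n+m choose k) - (n choose k) - (m choose k)" for k
  define cross where "cross k = (\<Prod>S\<in>crossing_ksubsets ?N ?M k. kweight \<Phi> k S (restr \<omega> S))" for k
  have parts: "{1..n+m} = ?N \<union> ?M" "?N \<inter> ?M = {}"
    by auto
  have weight: "weight \<Phi> {1..n+m} \<omega> =
      weight \<Phi> ?N (restr \<omega> ?N) * weight \<Phi> ?M (restr \<omega> ?M) * prod cross ?K"
    unfolding cross_def parts(1) using assms(1,2) parts(2) by (intro weight_Un_disjoint) auto
  have lo: "wmin ar \<Phi> k ^ e k \<le> cross k" and hi: "cross k \<le> wmax ar \<Phi> k ^ e k" if "k \<in> ?K" for k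
    using prod_crossing_kweight_bounds[OF assms(5) _ _ parts(2), of k \<Phi>] that
    by (simp_all add: cross_def e_def)
  have lo_nonneg: "0 \<le> wmin ar \<Phi> k ^ e k" for k
    using wmin_pos[of ar \<Phi> k] by simp
  have "(\<Prod>k\<in>?K. wmin ar \<Phi> k ^ e k) \<le> prod cross ?K"
    using lo lo_nonneg by (intro prod_mono) simp
  moreover have "prod cross ?K \<le> (\<Prod>k\<in>?K. wmax ar \<Phi> k ^ e k)"
    using lo hi lo_nonneg by (intro prod_mono) (meson order_trans)
  moreover have "0 \<le> weight \<Phi> ?N (restr \<omega> ?N) * weight \<Phi> ?M (restr \<omega> ?M)"
    by (simp add: weight_def)
  ultimately show ?thesis
    unfolding weight e_def by (simp add: mult_left_mono)
qed

end
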